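(* There is a constant $C$ such that every $(g,a)\in\Gamma_1$ satisfies $\|a_1\|\le C$. Moreover, if $(g,a)\in\Gamma_2$, then $a_1=0$.
   Context: $E(n)$ is the Euclidean group, with elements $(g,a)$ acting by $(g,a)x=gx+a$. $\Gamma\subset E(n)$ is a discrete, fixed-point-free subgroup. $\Gamma^*$ is the intersection of $\Gamma$ with the identity component of the closure of $\Gamma\cdot\mathbb R^n$. By a theorem of Wolf, $\Gamma^*$ is normal of finite index in $\Gamma$. There exist a subspace $V\subset\mathbb R^n$ and a toral subgroup $T\subset O(n)$ such that $T$ acts trivially on $V$, $\Gamma^*\subset T\cdot V$, and $\Gamma^*$ is isomorphic to a discrete uniform subgroup of $V$. Let $\mathbb R^n=V_\perp\oplus V$ orthogonally. Define \[ \Gamma_1=\{(g,a)\in\Gamma: g|_{V_\perp}=I_{V_\perp}\},\qquad \Gamma^{**}=\Gamma^*\cap\Gamma_1 . \] The elements of $\Gamma^{**}$ are pure translations by vectors in $V$. Let $V_2\subset V$ be the linear span of these translation vectors, and let $V_1$ be the orthogonal complement of $V_2$ in $V$, so that $\mathbb R^n=V_\perp\oplus V_1\oplus V_2$. Define \[ \Gamma_2=\{(g,a)\in\Gamma_1: g|_{V_1}=I_{V_1}\}. \] For $a\in\mathbb R^n$ write $a=a_\perp+a_1+a_2$ according to this decomposition. *)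

theory Defs
  imports "HOL-Analysis.Analysis"
begin

text \<open>Elements of the Euclidean group E(n) are pairs (g,a) of an n x n matrix g
  and a vector a, acting by (g,a)x = gx + a.  The ambient space of pairs carries the
  product (Euclidean) topology.\<close>

type_synonym 'n euc = "(real^'n^'n) \<times> (real^'n)"

definition euc_mult :: "'n::finite euc \<Rightarrow> 'n euc \<Rightarrow> 'n euc" where
  "euc_mult p q = (fst p ** fst q, fst p *v snd q + snd p)"

definition euc_one :: "'n::finite euc" where
  "euc_one = (mat 1, 0)"

definition euc_inv :: "'n::finite euc \<Rightarrow> 'n euc" where
  "euc_inv p = (transpose (fst p), - (transpose (fst p) *v snd p))"

definition euc_act :: "'n::finite euc \<Rightarrow> real^'n \<Rightarrow> real^'n" where
  "euc_act p x = fst p *v x + snd p"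

definition Euclidean_group :: "'n::finite euc set" where
  "Euclidean_group = {p. orthogonal_matrix (fst p)}"

definition euc_subgroup :: "'n::finite euc set \<Rightarrow> bool" where
  "euc_subgroup G \<longleftrightarrow> G \<subseteq> Euclidean_group \<and> euc_one \<in> G \<and>
     (\<forall>p\<in>G. \<forall>q\<in>G. euc_mult p q \<in> G) \<and> (\<forall>p\<in>G. euc_inv p \<in> G)"

definition discrete_set :: "'a::metric_space set \<Rightarrow> bool" where
  "discrete_set S \<longleftrightarrow> (\<forall>x\<in>S. \<exists>e>0. \<forall>y\<in>S. dist y x < e \<longrightarrow> y = x)"

definition fixed_point_free :: "'n::finite euc set \<Rightarrow> bool" where
  "fixed_point_free G \<longleftrightarrow> (\<forall>p\<in>G. p \<noteq> euc_one \<longrightarrow> (\<forall>x. euc_act p x \<noteq> x))"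

definition transl_set :: "'n::finite euc set" where
  "transl_set = {(mat 1, b) | b. True}"

definition Gamma_Rn :: "'n::finite euc set \<Rightarrow> 'n euc set" where
  "Gamma_Rn G = {euc_mult p t | p t. p \<in> G \<and> t \<in> transl_set}"

definition Gamma_star :: "'n::finite euc set \<Rightarrow> 'n euc set" where
  "Gamma_star G = G \<inter> connected_component_set (closure (Gamma_Rn G)) euc_one"

definition toral_subgroup :: "(real^'n^'n::finite) set \<Rightarrow> bool" where
  "toral_subgroup T \<longleftrightarrow> T \<subseteq> {g. orthogonal_matrix g} \<and> mat 1 \<in> T \<and>
     (\<forall>s\<in>T. \<forall>t\<in>T. s ** t \<in> T) \<and> (\<forall>t\<in>T. transpose t \<in> T) \<and>
     compact T \<and> connected T \<and> (\<forall>s\<in>T. \<forall>t\<in>T. s ** t = t ** s)"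

definition TV_set :: "(real^'n^'n::finite) set \<Rightarrow> (real^'n) set \<Rightarrow> 'n euc set" where
  "TV_set T V = {(t, v) | t v. t \<in> T \<and> v \<in> V}"

definition discrete_uniform_subgroup :: "(real^'n::finite) set \<Rightarrow> (real^'n) set \<Rightarrow> bool" where
  "discrete_uniform_subgroup L V \<longleftrightarrow> L \<subseteq> V \<and> 0 \<in> L \<and>
     (\<forall>x\<in>L. \<forall>y\<in>L. x + y \<in> L) \<and> (\<forall>x\<in>L. - x \<in> L) \<and> discrete_set L \<and>
     (\<exists>K. compact K \<and> K \<subseteq> V \<and> V \<subseteq> {k + l | k l. k \<in> K \<and> l \<in> L})"

definition orth_comp :: "(real^'n::finite) set \<Rightarrow> (real^'n) set \<Rightarrow> (real^'n) set" where
  "orth_comp W U = {x \<in> U. \<forall>y\<in>W. inner x y = 0}"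

definition proj :: "(real^'n::finite) set \<Rightarrow> real^'n \<Rightarrow> real^'n" where
  "proj W a = (THE u. u \<in> W \<and> (\<forall>w\<in>W. inner (a - u) w = 0))"

definition Gamma1 :: "'n::finite euc set \<Rightarrow> (real^'n) set \<Rightarrow> 'n euc set" where
  "Gamma1 G V = {p \<in> G. \<forall>x\<in>orth_comp V UNIV. fst p *v x = x}"

definition Gamma_2star :: "'n::finite euc set \<Rightarrow> (real^'n) set \<Rightarrow> 'n euc set" where
  "Gamma_2star G V = Gamma_star G \<inter> Gamma1 G V"

definition V2_of :: "'n::finite euc set \<Rightarrow> (real^'n) set \<Rightarrow> (real^'n) set" where
  "V2_of G V = span {snd p | p. p \<in> Gamma_2star G V}"

definition V1_of :: "'n::finite euc set \<Rightarrow> (real^'n) set \<Rightarrow> (real^'n) set" where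
  "V1_of G V = orth_comp (V2_of G V) V"

definition Gamma2 :: "'n::finite euc set \<Rightarrow> (real^'n) set \<Rightarrow> 'n euc set" where
  "Gamma2 G V = {p \<in> Gamma1 G V. \<forall>x\<in>V1_of G V. fst p *v x = x}"

end

theory Submission imports Defs begin

text \<open>
  For (g,a) in Gamma_1 pick a representative r of its coset modulo Gamma* that also lies
  in Gamma_1, and write (g,a) = r q with q = (t,v) in Gamma* \<subseteq> T.V.  Then t fixes both V
  and V_perp, so q is a translation; its conjugate by r is the translation by g v, which
  lies in Gamma** and hence g v \<in> V_2.  Thus a_1 agrees with the V_1-component of r's
  translation, and there are only finitely many cosets.  For p \<in> Gamma_2 the linear part
  fixes V_1 pointwise, so the V_1-component of the translation of p^k is k a_1; by
  finiteness of the index some p^k with k > 0 lies in Gamma**, where that component is 0.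

  Only normality and finite index of Gamma*, Gamma* \<subseteq> T.V and the triviality of T on V
  are used.
\<close>

lemma proj_exists_unique:
  fixes W :: "(real^'n::finite) set"
  assumes "subspace W"
  shows "\<exists>!u. u \<in> W \<and> (\<forall>w\<in>W. inner (a - u) w = 0)"
proof -
  obtain y z where y: "y \<in> span W" and z: "\<And>w. w \<in> span W \<Longrightarrow> orthogonal z w"
    and a: "a = y + z"
    using orthogonal_subspace_decomp_exists[of W a] by blast
  have "y \<in> W" using y assms by (metis span_eq_iff)
  then have y_spec: "y \<in> W \<and> (\<forall>w\<in>W. inner (a - y) w = 0)"
    using z a by (auto simp: orthogonal_def intro: span_base)
  show ?thesis
  proof (rule ex1I[of _ y])
    fix u assume u: "u \<in> W \<and> (\<forall>w\<in>W. inner (a - u) w = 0)"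
    have "y - u \<in> W" using u y_spec assms by (simp add: subspace_diff)
    have "inner (y - u) (y - u) = inner (a - u) (y - u) - inner (a - y) (y - u)"
      by (simp add: inner_diff_left)
    also have "\<dots> = 0" using u y_spec \<open>y - u \<in> W\<close> by simp
    finally show "u = y" by simp
  qed (rule y_spec)
qed

lemma proj_spec:
  fixes W :: "(real^'n::finite) set"
  assumes "subspace W"
  shows "proj W a \<in> W" and "\<forall>w\<in>W. inner (a - proj W a) w = 0"
  using theI'[OF proj_exists_unique[OF assms, of a]] unfolding proj_def by auto

lemma proj_unique:
  fixes W :: "(real^'n::finite) set"
  assumes "subspace W" "u \<in> W" "\<forall>w\<in>W. inner (a - u) w = 0"
  shows "proj W a = u"
  using proj_exists_unique[OF assms(1), of a] proj_spec[OF assms(1), of a] assms(2,3) by blast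

lemma proj_add:
  fixes W :: "(real^'n::finite) set"
  assumes "subspace W"
  shows "proj W (a + b) = proj W a + proj W b"
  using proj_spec[OF assms, of a] proj_spec[OF assms, of b]
  by (intro proj_unique[OF assms])
     (auto simp: subspace_add[OF assms] inner_diff_left inner_add_left)

lemma proj_eq_0:
  fixes W :: "(real^'n::finite) set"
  assumes "subspace W" "\<forall>w\<in>W. inner a w = 0"
  shows "proj W a = 0"
  using assms by (intro proj_unique) (auto simp: subspace_0)

lemma orthogonal_matrix_inner:
  assumes "orthogonal_matrix g"
  shows "inner (g *v x) (g *v y) = inner x (y::real^'n::finite)"
proof -
  have "inner (g *v x) (g *v y) = inner (transpose g *v (g *v x)) y"
    by (simp add: dot_lmul_matrix[symmetric])
  also have "transpose g *v (g *v x) = x"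
    using assms by (simp add: matrix_vector_mul_assoc orthogonal_matrix_def)
  finally show ?thesis .
qed

lemma orthogonal_matrix_cancel:
  assumes "orthogonal_matrix g" "g *v x = g *v (y::real^'n::finite)"
  shows "x = y"
proof -
  have "transpose g *v (g *v x) = transpose g *v (g *v y)" using assms(2) by simp
  then show ?thesis
    using assms(1) by (simp add: matrix_vector_mul_assoc orthogonal_matrix_def)
qed

text \<open>Since \<open>\<langle>g x, w\<rangle> = \<langle>g x, g w\<rangle> = \<langle>x, w\<rangle>\<close> for w \<in> W.\<close>
lemma proj_orthogonal_matrix_fixing:
  fixes W :: "(real^'n::finite) set"
  assumes "subspace W" "orthogonal_matrix g" "\<forall>w\<in>W. g *v w = w"
  shows "proj W (g *v x) = proj W x"
proof (rule proj_unique[OF assms(1) proj_spec(1)[OF assms(1)]], intro ballI)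
  fix w assume "w \<in> W"
  then have "inner (g *v x) w = inner x w"
    using orthogonal_matrix_inner[OF assms(2), of x w] assms(3) by simp
  then show "inner (g *v x - proj W x) w = 0"
    using proj_spec(2)[OF assms(1), of x] \<open>w \<in> W\<close> by (simp add: inner_diff_left)
qed

lemma subspace_orth_comp:
  assumes "subspace U"
  shows "subspace (orth_comp W U)"
  using assms unfolding subspace_def orth_comp_def by (auto simp: inner_add_left)

lemma matrix_fixing_subspace_and_orth_comp_eq_id:
  fixes t :: "real^'n^'n::finite"
  assumes "subspace V" "\<forall>v\<in>V. t *v v = v" "\<forall>x\<in>orth_comp V UNIV. t *v x = x"
  shows "t = mat 1"
proof -
  have "t *v x = x" for x
  proof -
    have "x - proj V x \<in> orth_comp V UNIV"
      using proj_spec(2)[OF assms(1), of x] by (simp add: orth_comp_def)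
    then have "t *v (x - proj V x) + t *v proj V x = x"
      using assms(2,3) proj_spec(1)[OF assms(1), of x] by simp
    then show ?thesis by (simp add: matrix_vector_right_distrib[symmetric])
  qed
  then show ?thesis by (simp add: matrix_eq)
qed

lemma euc_mult_assoc: "euc_mult (euc_mult a b) c = euc_mult a (euc_mult b c)"
  by (simp add: euc_mult_def matrix_mul_assoc matrix_vector_mul_assoc
      matrix_vector_right_distrib add.assoc)

lemma euc_mult_one_left [simp]: "euc_mult euc_one a = a"
  by (simp add: euc_mult_def euc_one_def)

lemma euc_mult_one_right [simp]: "euc_mult a euc_one = a"
  by (simp add: euc_mult_def euc_one_def)

lemma euc_mult_left_cancel:
  assumes "orthogonal_matrix (fst a)" "euc_mult a x = euc_mult a y"
  shows "x = y"
proof -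
  have m: "fst a ** fst x = fst a ** fst y" and v: "fst a *v snd x = fst a *v snd y"
    using assms(2) by (auto simp: euc_mult_def)
  have "fst x = fst y"
    using orthogonal_matrix_cancel[OF assms(1)] m
    by (simp add: matrix_eq matrix_vector_mul_assoc[symmetric])
  moreover have "snd x = snd y" using orthogonal_matrix_cancel[OF assms(1) v] .
  ultimately show ?thesis by (simp add: prod_eq_iff)
qed

lemma euc_conj_translation:
  assumes "orthogonal_matrix (fst r)"
  shows "euc_mult (euc_mult r (mat 1, v)) (euc_inv r) = (mat 1, fst r *v v)"
proof -
  have gg: "fst r ** transpose (fst r) = mat 1" using assms by (simp add: orthogonal_matrix_def)
  have "fst r *v (- (transpose (fst r) *v snd r)) = - snd r"
    by (simp only: linear_neg[OF matrix_vector_mul_linear] matrix_vector_mul_assoc gg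
        matrix_vector_mul_lid)
  then show ?thesis
    unfolding euc_mult_def euc_inv_def by (simp only: fst_conv snd_conv matrix_mul_rid gg) simp
qed

primrec euc_pow :: "'n::finite euc \<Rightarrow> nat \<Rightarrow> 'n euc" where
  "euc_pow p 0 = euc_one"
| "euc_pow p (Suc k) = euc_mult p (euc_pow p k)"

lemma euc_pow_add: "euc_pow p (i + k) = euc_mult (euc_pow p i) (euc_pow p k)"
  by (induction i) (simp_all add: euc_mult_assoc)

lemma proj_snd_euc_pow:
  fixes W :: "(real^'n::finite) set"
  assumes "subspace W" "orthogonal_matrix (fst p)" "\<forall>w\<in>W. fst p *v w = w"
  shows "proj W (snd (euc_pow p k)) = real k *\<^sub>R proj W (snd p)"
proof (induction k)
  case 0
  show ?case using assms(1) by (simp add: euc_one_def proj_eq_0)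
next
  case (Suc k)
  have "snd (euc_pow p (Suc k)) = fst p *v snd (euc_pow p k) + snd p"
    by (simp add: euc_mult_def)
  then show ?case
    using Suc.IH by (simp add: proj_add[OF assms(1)] proj_orthogonal_matrix_fixing[OF assms]
        algebra_simps)
qed

definition euc_lcoset :: "'n::finite euc \<Rightarrow> 'n euc set \<Rightarrow> 'n euc set" where
  "euc_lcoset p S = {euc_mult p q | q. q \<in> S}"

lemma euc_lcoset_self: "euc_one \<in> S \<Longrightarrow> p \<in> euc_lcoset p S"
  unfolding euc_lcoset_def by (metis (mono_tags, lifting) euc_mult_one_right mem_Collect_eq)

lemma finite_range_nat_repeats:
  assumes "finite (range (f :: nat \<Rightarrow> 'a))"
  obtains i j where "i < j" "f i = f j"
proof -
  have "\<not> inj f" using assms finite_imageD infinite_UNIV_nat by blast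
  then obtain i j where "i \<noteq> j" "f i = f j" unfolding inj_def by blast
  then show ?thesis using that by (metis linorder_neqE_nat)
qed

lemma euc_pow_in_finite_index_subgroup:
  assumes "euc_subgroup G" "euc_one \<in> S" "finite ((\<lambda>p. euc_lcoset p S) ` G)" "p \<in> G"
  obtains k where "k > 0" "euc_pow p k \<in> S"
proof -
  have pow_G: "euc_pow p k \<in> G" for k
    using assms(1,4) by (induction k) (auto simp: euc_subgroup_def)
  have "range (\<lambda>k. euc_lcoset (euc_pow p k) S) \<subseteq> (\<lambda>p. euc_lcoset p S) ` G"
    using pow_G by blast
  then obtain i j where "i < j" and same: "euc_lcoset (euc_pow p i) S = euc_lcoset (euc_pow p j) S"
    using finite_range_nat_repeats finite_subset[OF _ assms(3)] by metis
  have "euc_pow p j \<in> euc_lcoset (euc_pow p i) S"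
    using same euc_lcoset_self[OF assms(2)] by simp
  then obtain q where "q \<in> S" and q: "euc_pow p j = euc_mult (euc_pow p i) q"
    unfolding euc_lcoset_def by blast
  have "euc_pow p j = euc_mult (euc_pow p i) (euc_pow p (j - i))"
    using \<open>i < j\<close> euc_pow_add[of p i "j - i"] by simp
  then have "q = euc_pow p (j - i)"
    using q pow_G[of i] assms(1)
    by (auto intro: euc_mult_left_cancel simp: euc_subgroup_def Euclidean_group_def)
  then show ?thesis using that[of "j - i"] \<open>q \<in> S\<close> \<open>i < j\<close> by simp
qed

lemma finite_image_if_factors:
  assumes "finite (k ` A)" "\<And>x y. x \<in> A \<Longrightarrow> y \<in> A \<Longrightarrow> k x = k y \<Longrightarrow> h x = h y"
  shows "finite (h ` A)"
proof -
  have "h ` A \<subseteq> (\<lambda>c. h (SOME x. x \<in> A \<and> k x = c)) ` k ` A"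
  proof
    fix z assume "z \<in> h ` A"
    then obtain x where x: "x \<in> A" "z = h x" by blast
    let ?y = "SOME y. y \<in> A \<and> k y = k x"
    have "?y \<in> A \<and> k ?y = k x" using someI[of "\<lambda>y. y \<in> A \<and> k y = k x" x] x(1) by blast
    then have "z = h ?y" using assms(2) x by metis
    then show "z \<in> (\<lambda>c. h (SOME x. x \<in> A \<and> k x = c)) ` k ` A" using x(1) by blast
  qed
  then show ?thesis using assms(1) finite_subset by blast
qed

lemma one_in_Gamma_star:
  assumes "euc_subgroup G"
  shows "euc_one \<in> Gamma_star G"
proof -
  have "euc_one = euc_mult euc_one (mat 1, 0)" by (simp add: euc_one_def euc_mult_def)
  then have "euc_one \<in> Gamma_Rn G"
    using assms unfolding Gamma_Rn_def transl_set_def euc_subgroup_def by blast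
  then show ?thesis
    using assms closure_subset unfolding Gamma_star_def euc_subgroup_def
    by (auto simp: connected_component_refl)
qed

lemma Gamma1_mult:
  assumes "euc_subgroup G" "p \<in> Gamma1 G V" "q \<in> Gamma1 G V"
  shows "euc_mult p q \<in> Gamma1 G V"
  using assms by (simp add: Gamma1_def euc_subgroup_def euc_mult_def matrix_vector_mul_assoc[symmetric])

lemma snd_in_V2_of:
  "q \<in> Gamma_star G \<Longrightarrow> q \<in> Gamma1 G V \<Longrightarrow> snd q \<in> V2_of G V"
  unfolding V2_of_def Gamma_2star_def by (blast intro: span_base)

lemma subspace_V1_of: "subspace V \<Longrightarrow> subspace (V1_of G V)"
  unfolding V1_of_def by (rule subspace_orth_comp)

lemma proj_V1_of_V2_of:
  assumes "subspace V" "x \<in> V2_of G V"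
  shows "proj (V1_of G V) x = 0"
  using assms by (intro proj_eq_0 subspace_V1_of) (auto simp: V1_of_def orth_comp_def inner_commute)

lemma proj_V1_of_Gamma1_coset:
  assumes subgrp: "euc_subgroup G"
    and normal: "\<forall>p\<in>G. \<forall>q\<in>Gamma_star G. euc_mult (euc_mult p q) (euc_inv p) \<in> Gamma_star G"
    and V_sub: "subspace V"
    and T_triv: "\<forall>t\<in>T. \<forall>v\<in>V. t *v v = v"
    and star_TV: "Gamma_star G \<subseteq> TV_set T V"
    and r: "r \<in> Gamma1 G V" and q: "q \<in> Gamma_star G" and rq: "euc_mult r q \<in> Gamma1 G V"
  shows "proj (V1_of G V) (snd (euc_mult r q)) = proj (V1_of G V) (snd r)"
proof -
  obtain t v where q_tv: "q = (t, v)" and "t \<in> T" "v \<in> V"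
    using q star_TV unfolding TV_set_def by blast
  have "r \<in> G" using r by (simp add: Gamma1_def)
  then have r_orth: "orthogonal_matrix (fst r)"
    using subgrp by (auto simp: euc_subgroup_def Euclidean_group_def)
  have "fst r *v (t *v x) = fst r *v x" if "x \<in> orth_comp V UNIV" for x
    using r rq that q_tv by (simp add: Gamma1_def euc_mult_def matrix_vector_mul_assoc)
  then have "\<forall>x\<in>orth_comp V UNIV. t *v x = x"
    using orthogonal_matrix_cancel[OF r_orth] by blast
  then have "t = mat 1"
    using matrix_fixing_subspace_and_orth_comp_eq_id[OF V_sub] T_triv \<open>t \<in> T\<close> by blast
  then have conj: "euc_mult (euc_mult r q) (euc_inv r) = (mat 1, fst r *v v)"
    using q_tv euc_conj_translation[OF r_orth] by simp
  then have "(mat 1, fst r *v v) \<in> Gamma_star G"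
    using normal \<open>r \<in> G\<close> q by metis
  moreover have "(mat 1, fst r *v v) \<in> Gamma1 G V"
    using calculation by (simp add: Gamma1_def Gamma_star_def)
  ultimately have "fst r *v v \<in> V2_of G V" using snd_in_V2_of by fastforce
  moreover have "snd (euc_mult r q) = fst r *v v + snd r"
    using q_tv by (simp add: euc_mult_def)
  ultimately show ?thesis
    using proj_add[OF subspace_V1_of[OF V_sub]] proj_V1_of_V2_of[OF V_sub] by simp
qed

lemma Gamma1_proj_V1_of_finite:
  assumes subgrp: "euc_subgroup G"
    and normal: "\<forall>p\<in>G. \<forall>q\<in>Gamma_star G. euc_mult (euc_mult p q) (euc_inv p) \<in> Gamma_star G"
    and fin_index: "finite ((\<lambda>p. euc_lcoset p (Gamma_star G)) ` G)"
    and V_sub: "subspace V"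
    and T_triv: "\<forall>t\<in>T. \<forall>v\<in>V. t *v v = v"
    and star_TV: "Gamma_star G \<subseteq> TV_set T V"
  shows "finite ((\<lambda>p. proj (V1_of G V) (snd p)) ` Gamma1 G V)"
proof (rule finite_image_if_factors)
  show "finite ((\<lambda>p. euc_lcoset p (Gamma_star G)) ` Gamma1 G V)"
    by (rule finite_subset[OF _ fin_index]) (auto simp: Gamma1_def)
next
  fix p r
  assume "p \<in> Gamma1 G V" "r \<in> Gamma1 G V"
    and "euc_lcoset p (Gamma_star G) = euc_lcoset r (Gamma_star G)"
  then obtain q where "q \<in> Gamma_star G" "p = euc_mult r q"
    using euc_lcoset_self[OF one_in_Gamma_star[OF subgrp], of p]
    unfolding euc_lcoset_def by auto
  then show "proj (V1_of G V) (snd p) = proj (V1_of G V) (snd r)"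
    using proj_V1_of_Gamma1_coset[OF assms(1,2,4-6)] \<open>p \<in> Gamma1 G V\<close> \<open>r \<in> Gamma1 G V\<close>
    by blast
qed

lemma Gamma2_proj_V1_of_eq_0:
  assumes subgrp: "euc_subgroup G"
    and fin_index: "finite ((\<lambda>p. euc_lcoset p (Gamma_star G)) ` G)"
    and V_sub: "subspace V"
    and p: "p \<in> Gamma2 G V"
  shows "proj (V1_of G V) (snd p) = 0"
proof -
  have p1: "p \<in> Gamma1 G V" and "p \<in> G" using p by (auto simp: Gamma2_def Gamma1_def)
  then have p_orth: "orthogonal_matrix (fst p)"
    using subgrp by (auto simp: euc_subgroup_def Euclidean_group_def)
  have "euc_pow p k \<in> Gamma1 G V" for k
  proof (induction k)
    case 0
    show ?case using subgrp by (simp add: Gamma1_def euc_subgroup_def euc_one_def)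
  qed (simp add: Gamma1_mult[OF subgrp p1])
  moreover obtain k where "k > 0" "euc_pow p k \<in> Gamma_star G"
    using euc_pow_in_finite_index_subgroup[OF subgrp one_in_Gamma_star[OF subgrp] fin_index \<open>p \<in> G\<close>] .
  ultimately have "proj (V1_of G V) (snd (euc_pow p k)) = 0"
    using proj_V1_of_V2_of[OF V_sub] snd_in_V2_of by blast
  moreover have "proj (V1_of G V) (snd (euc_pow p k)) = real k *\<^sub>R proj (V1_of G V) (snd p)"
    using V_sub p p_orth
    by (intro proj_snd_euc_pow subspace_V1_of) (auto simp: Gamma2_def)
  ultimately show ?thesis using \<open>k > 0\<close> by simp
qed

theorem lemma3p3:
  fixes G :: "'n::finite euc set"
    and T :: "(real^'n^'n) set"
    and V :: "(real^'n) set"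
  assumes subgrp: "euc_subgroup G"
    and discr: "discrete_set G"
    and fpf: "fixed_point_free G"
    \<comment> \<open>Wolf: \<Gamma>* is normal of finite index in \<Gamma>\<close>
    and normal: "\<forall>p\<in>G. \<forall>q\<in>Gamma_star G. euc_mult (euc_mult p q) (euc_inv p) \<in> Gamma_star G"
    and fin_index: "finite {{euc_mult p q | q. q \<in> Gamma_star G} | p. p \<in> G}"
    \<comment> \<open>Wolf: the subspace V and toral subgroup T\<close>
    and V_sub: "subspace V"
    and T_toral: "toral_subgroup T"
    and T_triv: "\<forall>t\<in>T. \<forall>v\<in>V. t *v v = v"
    and star_TV: "Gamma_star G \<subseteq> TV_set T V"
    and star_iso: "\<exists>\<phi> L. discrete_uniform_subgroup L V \<and> bij_betw \<phi> (Gamma_star G) L \<and>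
                      (\<forall>p\<in>Gamma_star G. \<forall>q\<in>Gamma_star G. \<phi> (euc_mult p q) = \<phi> p + \<phi> q)"
  shows "(\<exists>C. \<forall>p\<in>Gamma1 G V. norm (proj (V1_of G V) (snd p)) \<le> C) \<and>
         (\<forall>p\<in>Gamma2 G V. proj (V1_of G V) (snd p) = 0)"
proof
  have cosets: "finite ((\<lambda>p. euc_lcoset p (Gamma_star G)) ` G)"
    using fin_index unfolding euc_lcoset_def by (simp only: setcompr_eq_image Collect_mem_eq)
  then have "bounded ((\<lambda>p. proj (V1_of G V) (snd p)) ` Gamma1 G V)"
    using Gamma1_proj_V1_of_finite[OF subgrp normal _ V_sub T_triv star_TV] by blast
  then show "\<exists>C. \<forall>p\<in>Gamma1 G V. norm (proj (V1_of G V) (snd p)) \<le> C"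
    by (simp add: bounded_iff)
  show "\<forall>p\<in>Gamma2 G V. proj (V1_of G V) (snd p) = 0"
    using Gamma2_proj_V1_of_eq_0[OF subgrp cosets V_sub] by blast
qed

end
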